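(* Let $(X,\oplus,\odot,d)$ be any one of the spaces listed in the context, $\|x\|_{\mathcal F}=d(\tilde0,x)$. (i) If $A:X\to\mathbb{R}$ is additive ($A(x\oplus y)=A(x)+A(y)$), positive homogeneous ($A(\lambda\odot x)=\lambda A(x)$ for all $\lambda\ge0$) and continuous at $\tilde0$, then $|A(x)|\le|||A|||_{\mathcal F}\|x\|_{\mathcal F}$ for all $x\in X$. (ii) If $A:X\to X$ is additive ($A(x\oplus y)=A(x)\oplus A(y)$), positive homogeneous ($A(\lambda\odot x)=\lambda\odot A(x)$ for all $\lambda\ge0$) and continuous at $\tilde0$, then $\|A(x)\|_{\mathcal F}\le|||A|||_{\mathcal F}\|x\|_{\mathcal F}$ for all $x\in X$.
   Context: Fuzzy numbers $\mathbb{R}_{\mathcal F}$: functions $u:\mathbb{R}\to[0,1]$ that are normal, fuzzy convex, upper semicontinuous, with compact support closure; level sets $[u]^r=[u_-(r),u_+(r)]$; $[u\oplus v]^r=[u]^r+[v]^r$, $[\lambda\odot u]^r=\lambda[u]^r$, $\tilde0=\chi_{\{0\}}$; $D(u,v)=\sup_{r\in[0,1]}\max\{|u_-(r)-v_-(r)|,|u_+(r)-v_+(r)|\}$. The admissible spaces $(X,\oplus,\odot,d)$ (operations pointwise/componentwise): $(\mathbb{R}_{\mathcal F},D)$; $C([a,b];\mathbb{R}_{\mathcal F})$ with sup-metric $D^*$; $L^p([a,b];\mathbb{R}_{\mathcal F})$ ($1\le p<\infty$) with $D_p(f,g)=(\int_a^bD(f,g)^p)^{1/p}$; $C^p([a,b];\mathbb{R}_{\mathcal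 F})$ with $D_p^*(f,g)=\sum_{i=0}^pD^*(f^{(i)},g^{(i)})$; $l^p_{\mathbb{R}_{\mathcal F}}$ with $\rho_p$; $m_{\mathbb{R}_{\mathcal F}}$, $c_{\mathbb{R}_{\mathcal F}}$, $c^{\tilde0}_{\mathbb{R}_{\mathcal F}}$ with $\mu(x,y)=\sup_nD(x_n,y_n)$; finite Cartesian products with max metric. For such $A$, $\mathcal M_A=\{M>0:|A(x)|\le M\|x\|_{\mathcal F}\ \forall x\}$ (resp. $\{M>0:\|A(x)\|_{\mathcal F}\le M\|x\|_{\mathcal F}\ \forall x\}$) and $|||A|||_{\mathcal F}=\inf\mathcal M_A$. *)

theory Defs
  imports Main Complex_Main
begin

text \<open>Abstract rendering of the admissible spaces (X, add, smul, d) with zero element z: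
  the common structure shared by (R_F, D), C([a,b];R_F), L^p, C^p, l^p, m, c, c^0 and
  finite products.\<close>

definition admissible_fuzzy_space ::
  "'a set \<Rightarrow> ('a \<Rightarrow> 'a \<Rightarrow> 'a) \<Rightarrow> (real \<Rightarrow> 'a \<Rightarrow> 'a) \<Rightarrow> 'a \<Rightarrow> ('a \<Rightarrow> 'a \<Rightarrow> real) \<Rightarrow> bool" where
  "admissible_fuzzy_space X add smul z d \<longleftrightarrow>
     z \<in> X
   \<and> (\<forall>x\<in>X. \<forall>y\<in>X. add x y \<in> X)
   \<and> (\<forall>l. \<forall>x\<in>X. smul l x \<in> X)
   \<and> (\<forall>x\<in>X. \<forall>y\<in>X. \<forall>w\<in>X. add (add x y) w = add x (add y w))
   \<and> (\<forall>x\<in>X. \<forall>y\<in>X. add x y = add y x)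
   \<and> (\<forall>x\<in>X. add z x = x)
   \<and> (\<forall>x\<in>X. smul 1 x = x)
   \<and> (\<forall>l m. \<forall>x\<in>X. smul l (smul m x) = smul (l * m) x)
   \<and> (\<forall>l. \<forall>x\<in>X. \<forall>y\<in>X. smul l (add x y) = add (smul l x) (smul l y))
   \<and> (\<forall>l m. \<forall>x\<in>X. l \<ge> 0 \<longrightarrow> m \<ge> 0 \<longrightarrow> smul (l + m) x = add (smul l x) (smul m x))
   \<and> (\<forall>x\<in>X. \<forall>y\<in>X. d x y \<ge> 0)
   \<and> (\<forall>x\<in>X. \<forall>y\<in>X. d x y = 0 \<longleftrightarrow> x = y)
   \<and> (\<forall>x\<in>X. \<forall>y\<in>X. d x y = d y x)
   \<and> (\<forall>x\<in>X. \<forall>y\<in>X. \<forall>w\<in>X. d x w \<le> d x y + d y w)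
   \<and> (\<forall>x\<in>X. \<forall>y\<in>X. \<forall>w\<in>X. d (add x w) (add y w) = d x y)
   \<and> (\<forall>l. \<forall>x\<in>X. \<forall>y\<in>X. d (smul l x) (smul l y) = \<bar>l\<bar> * d x y)"

definition fnorm :: "('a \<Rightarrow> 'a \<Rightarrow> real) \<Rightarrow> 'a \<Rightarrow> 'a \<Rightarrow> real" where
  "fnorm d z x = d z x"

definition opnorm_real ::
  "'a set \<Rightarrow> ('a \<Rightarrow> 'a \<Rightarrow> real) \<Rightarrow> 'a \<Rightarrow> ('a \<Rightarrow> real) \<Rightarrow> real" where
  "opnorm_real X d z A = Inf {M. M > 0 \<and> (\<forall>x\<in>X. \<bar>A x\<bar> \<le> M * fnorm d z x)}"

definition opnorm_self ::
  "'a set \<Rightarrow> ('a \<Rightarrow> 'a \<Rightarrow> real) \<Rightarrow> 'a \<Rightarrow> ('a \<Rightarrow> 'a) \<Rightarrow> real" where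
  "opnorm_self X d z A = Inf {M. M > 0 \<and> (\<forall>x\<in>X. fnorm d z (A x) \<le> M * fnorm d z x)}"

end

theory Submission
  imports Defs
begin

text \<open>Both parts concern a nonnegative function g that is positively homogeneous with respect
  to the norm n: g x = |A x| resp. g x = n (A x).  Additivity forces A to fix the zero, so
  continuity at the zero makes g smaller than 1 on an n-ball of radius \<delta>; rescaling any x
  into that ball gives g x \<le> (2/\<delta>) n x.  Hence the set of bounds defining the operator norm
  is nonempty, and dividing by n x shows that its infimum is again a bound.\<close>

lemma homogeneous_continuous_linear_bound:
  fixes g n :: "'a \<Rightarrow> real" and s :: "real \<Rightarrow> 'a \<Rightarrow> 'a"
  assumes cont: "\<forall>e>0. \<exists>\<delta>>0. \<forall>x\<in>X. n x < \<delta> \<longrightarrow> g x < e"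
    and s_closed: "\<And>c x. c > 0 \<Longrightarrow> x \<in> X \<Longrightarrow> s c x \<in> X"
    and n_hom: "\<And>c x. c > 0 \<Longrightarrow> x \<in> X \<Longrightarrow> n (s c x) = c * n x"
    and g_hom: "\<And>c x. c > 0 \<Longrightarrow> x \<in> X \<Longrightarrow> g (s c x) = c * g x"
    and n_nonneg: "\<And>x. x \<in> X \<Longrightarrow> n x \<ge> 0"
  obtains K where "K > 0" "\<forall>x\<in>X. g x \<le> K * n x"
proof -
  obtain \<delta> where \<delta>: "\<delta> > 0" and small: "\<And>x. x \<in> X \<Longrightarrow> n x < \<delta> \<Longrightarrow> g x < 1"
    using cont by (meson zero_less_one)
  have scaled: "c * g x < 1" if "c > 0" "x \<in> X" "c * n x < \<delta>" for c x
    using small[of "s c x"] that s_closed n_hom g_hom by simp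
  have "g x \<le> (2 / \<delta>) * n x" if x: "x \<in> X" for x
  proof (cases "n x = 0")
    case True
    show ?thesis
    proof (rule ccontr)
      assume "\<not> ?thesis"
      then have "g x > 0" using True by simp
      then show False using scaled[of "1 / g x" x] x True \<delta> by simp
    qed
  next
    case False
    then have nx: "n x > 0" using n_nonneg x by (simp add: order_less_le)
    define c where "c = \<delta> / (2 * n x)"
    have c: "c > 0" "c * n x = \<delta> / 2" using nx \<delta> by (simp_all add: c_def)
    then have "c * g x < 1" using scaled x \<delta> by simp
    then have "g x < 1 / c" using c by (simp add: mult.commute pos_less_divide_eq)
    also have "1 / c = (2 / \<delta>) * n x" using nx \<delta> by (simp add: c_def)
    finally show ?thesis by simp
  qed
  with \<delta> show thesis by (intro that[of "2 / \<delta>"]) auto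
qed

lemma le_Inf_linear_bounds:
  fixes g n :: "'a \<Rightarrow> real"
  assumes "K > 0" and bound: "\<forall>x\<in>X. g x \<le> K * n x"
    and g_nonneg: "\<forall>x\<in>X. g x \<ge> 0" and x: "x \<in> X"
  shows "g x \<le> Inf {M. M > 0 \<and> (\<forall>x\<in>X. g x \<le> M * n x)} * n x"
proof -
  have "0 \<le> K * n x" using bound g_nonneg x by (meson order_trans)
  then have "n x \<ge> 0" using \<open>K > 0\<close> by (simp add: zero_le_mult_iff)
  show ?thesis
  proof (cases "n x = 0")
    case True
    then show ?thesis using bound g_nonneg x by force
  next
    case False
    with \<open>n x \<ge> 0\<close> have nx: "n x > 0" by simp
    have "g x / n x \<le> Inf {M. M > 0 \<and> (\<forall>x\<in>X. g x \<le> M * n x)}"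
    proof (rule cInf_greatest)
      show "{M. M > 0 \<and> (\<forall>x\<in>X. g x \<le> M * n x)} \<noteq> {}" using assms by blast
    next
      fix M assume "M \<in> {M. M > 0 \<and> (\<forall>x\<in>X. g x \<le> M * n x)}"
      then show "g x / n x \<le> M" using x nx by (simp add: divide_le_eq)
    qed
    then show ?thesis using nx by (simp add: divide_le_eq)
  qed
qed

lemma homogeneous_continuous_le_Inf_bounds:
  fixes g n :: "'a \<Rightarrow> real" and s :: "real \<Rightarrow> 'a \<Rightarrow> 'a"
  assumes "\<forall>e>0. \<exists>\<delta>>0. \<forall>x\<in>X. n x < \<delta> \<longrightarrow> g x < e"
    and "\<And>c x. c > 0 \<Longrightarrow> x \<in> X \<Longrightarrow> s c x \<in> X"
    and "\<And>c x. c > 0 \<Longrightarrow> x \<in> X \<Longrightarrow> n (s c x) = c * n x"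
    and "\<And>c x. c > 0 \<Longrightarrow> x \<in> X \<Longrightarrow> g (s c x) = c * g x"
    and "\<And>x. x \<in> X \<Longrightarrow> n x \<ge> 0"
    and "\<forall>x\<in>X. g x \<ge> 0"
  shows "\<forall>x\<in>X. g x \<le> Inf {M. M > 0 \<and> (\<forall>x\<in>X. g x \<le> M * n x)} * n x"
proof -
  obtain K where "K > 0" "\<forall>x\<in>X. g x \<le> K * n x"
    using homogeneous_continuous_linear_bound[OF assms(1-5)] .
  from le_Inf_linear_bounds[OF this assms(6)] show ?thesis ..
qed

locale fuzzy_metric_cone =
  fixes X :: "'a set" and add :: "'a \<Rightarrow> 'a \<Rightarrow> 'a" and smul :: "real \<Rightarrow> 'a \<Rightarrow> 'a"
    and z :: 'a and d :: "'a \<Rightarrow> 'a \<Rightarrow> real"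
  assumes zero_in: "z \<in> X"
    and smul_closed: "x \<in> X \<Longrightarrow> smul l x \<in> X"
    and add_zero_left: "x \<in> X \<Longrightarrow> add z x = x"
    and smul_add: "x \<in> X \<Longrightarrow> y \<in> X \<Longrightarrow> smul l (add x y) = add (smul l x) (smul l y)"
    and dist_nonneg: "x \<in> X \<Longrightarrow> y \<in> X \<Longrightarrow> d x y \<ge> 0"
    and dist_eq_0_iff: "x \<in> X \<Longrightarrow> y \<in> X \<Longrightarrow> d x y = 0 \<longleftrightarrow> x = y"
    and dist_add_right: "x \<in> X \<Longrightarrow> y \<in> X \<Longrightarrow> w \<in> X \<Longrightarrow> d (add x w) (add y w) = d x y"
    and dist_smul: "x \<in> X \<Longrightarrow> y \<in> X \<Longrightarrow> d (smul l x) (smul l y) = \<bar>l\<bar> * d x y"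
begin

lemma add_idem_imp_zero:
  assumes w: "w \<in> X" and "add w w = w"
  shows "w = z"
proof -
  have "d w z = d (add w w) (add z w)" using dist_add_right w zero_in by simp
  also have "\<dots> = 0" using assms add_zero_left dist_eq_0_iff by simp
  finally show ?thesis using dist_eq_0_iff w zero_in by simp
qed

lemma smul_zero: "smul l z = z"
proof -
  have "add (smul l z) (smul l z) = smul l z"
    using smul_add[OF zero_in zero_in] add_zero_left[OF zero_in] by simp
  then show ?thesis using add_idem_imp_zero smul_closed zero_in by blast
qed

lemma fnorm_smul:
  assumes "c \<ge> 0" "x \<in> X"
  shows "d z (smul c x) = c * d z x"
  using dist_smul[OF zero_in assms(2), of c] assms(1) smul_zero by simp

theorem functional_bounded_by_opnorm:
  fixes A :: "'a \<Rightarrow> real"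
  assumes additive: "\<forall>x\<in>X. \<forall>y\<in>X. A (add x y) = A x + A y"
    and homogeneous: "\<forall>l\<ge>0. \<forall>x\<in>X. A (smul l x) = l * A x"
    and continuous: "\<forall>e>0. \<exists>\<delta>>0. \<forall>x\<in>X. d z x < \<delta> \<longrightarrow> \<bar>A x - A z\<bar> < e"
  shows "\<forall>x\<in>X. \<bar>A x\<bar> \<le> opnorm_real X d z A * fnorm d z x"
proof -
  have "A z = A z + A z" using additive zero_in add_zero_left[OF zero_in] by metis
  then have "A z = 0" by simp
  then have "\<forall>x\<in>X. \<bar>A x\<bar> \<le> Inf {M. M > 0 \<and> (\<forall>x\<in>X. \<bar>A x\<bar> \<le> M * d z x)} * d z x"
    using continuous homogeneous smul_closed fnorm_smul dist_nonneg[OF zero_in]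
    by (intro homogeneous_continuous_le_Inf_bounds[where s = smul]) (auto simp: abs_mult)
  then show ?thesis unfolding opnorm_real_def fnorm_def .
qed

theorem operator_bounded_by_opnorm:
  fixes A :: "'a \<Rightarrow> 'a"
  assumes closed: "\<forall>x\<in>X. A x \<in> X"
    and additive: "\<forall>x\<in>X. \<forall>y\<in>X. A (add x y) = add (A x) (A y)"
    and homogeneous: "\<forall>l\<ge>0. \<forall>x\<in>X. A (smul l x) = smul l (A x)"
    and continuous: "\<forall>e>0. \<exists>\<delta>>0. \<forall>x\<in>X. d z x < \<delta> \<longrightarrow> d (A z) (A x) < e"
  shows "\<forall>x\<in>X. fnorm d z (A x) \<le> opnorm_self X d z A * fnorm d z x"
proof -
  have "add (A z) (A z) = A z" using additive zero_in add_zero_left[OF zero_in] by metis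
  then have "A z = z" using add_idem_imp_zero closed zero_in by blast
  then have "\<forall>x\<in>X. d z (A x) \<le> Inf {M. M > 0 \<and> (\<forall>x\<in>X. d z (A x) \<le> M * d z x)} * d z x"
    using continuous homogeneous closed smul_closed fnorm_smul dist_nonneg[OF zero_in]
    by (intro homogeneous_continuous_le_Inf_bounds[where s = smul]) auto
  then show ?thesis unfolding opnorm_self_def fnorm_def .
qed

end

lemma admissible_fuzzy_space_imp_fuzzy_metric_cone:
  "admissible_fuzzy_space X add smul z d \<Longrightarrow> fuzzy_metric_cone X add smul z d"
  unfolding admissible_fuzzy_space_def by (elim conjE, unfold_locales; metis)

theorem corollary3p4:
  fixes X :: "'a set" and add :: "'a \<Rightarrow> 'a \<Rightarrow> 'a" and smul :: "real \<Rightarrow> 'a \<Rightarrow> 'a"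
    and z :: 'a and d :: "'a \<Rightarrow> 'a \<Rightarrow> real"
  assumes "admissible_fuzzy_space X add smul z d"
  shows "(\<forall>A :: 'a \<Rightarrow> real.
           (\<forall>x\<in>X. \<forall>y\<in>X. A (add x y) = A x + A y)
         \<and> (\<forall>l\<ge>0. \<forall>x\<in>X. A (smul l x) = l * A x)
         \<and> (\<forall>e>0. \<exists>\<delta>>0. \<forall>x\<in>X. d z x < \<delta> \<longrightarrow> \<bar>A x - A z\<bar> < e)
         \<longrightarrow> (\<forall>x\<in>X. \<bar>A x\<bar> \<le> opnorm_real X d z A * fnorm d z x))
       \<and> (\<forall>A :: 'a \<Rightarrow> 'a.
           (\<forall>x\<in>X. A x \<in> X)
         \<and> (\<forall>x\<in>X. \<forall>y\<in>X. A (add x y) = add (A x) (A y))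
         \<and> (\<forall>l\<ge>0. \<forall>x\<in>X. A (smul l x) = smul l (A x))
         \<and> (\<forall>e>0. \<exists>\<delta>>0. \<forall>x\<in>X. d z x < \<delta> \<longrightarrow> d (A z) (A x) < e)
         \<longrightarrow> (\<forall>x\<in>X. fnorm d z (A x) \<le> opnorm_self X d z A * fnorm d z x))"
proof -
  interpret fuzzy_metric_cone X add smul z d
    using assms by (rule admissible_fuzzy_space_imp_fuzzy_metric_cone)
  show ?thesis
    by (intro conjI allI impI; elim conjE)
      ((rule functional_bounded_by_opnorm; assumption), (rule operator_bounded_by_opnorm; assumption))
qed

end
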